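(* Let $\mathcal{X}$ be a finite set with symmetric nonnegative weights $(w_{x,x'})$ summing to $1$, with $w_x:=\sum_{x'}w_{x,x'}>0$ for all $x$. Let $\boldsymbol{T}=(\tau_{x,x'})$ be a matrix of positive temperatures. For $f:\mathcal{X}\to\mathbb{R}^k$, define the temperature scaling loss $$\mathcal{L}_{\mathrm{T}}(f)=-2\sum_{x,x'}w_{x,x'}\frac{f(x)^\top f(x')}{\tau_{x,x'}}+\sum_{x,x'}w_xw_{x'}\Big[\frac{f(x)^\top f(x')}{\tau_{x,x'}}\Big]^2 .$$ Let $\boldsymbol{A}=(w_{x,x'})$, $\boldsymbol{D}=\mathrm{diag}(w_x)$, $\bar{\boldsymbol{A}}=\boldsymbol{D}^{-1/2}\boldsymbol{A}\boldsymbol{D}^{-1/2}$, and let $F$ be the matrix with rows $\sqrt{w_x}f(x)^\top$. Then there is a constant $C$, independent of $f$, such that for all $f$ $$\mathcal{L}_{\mathrm{T}}(f)=\|\boldsymbol{T}\odot\bar{\boldsymbol{A}}-FF^\top\|_{wF}^2+C .$$ In particular, minimizing $\mathcal{L}_{\mathrm{T}}$ over $f$ is equivalent to minimizing $\|\boldsymbol{T}\odot\bar{\boldsymbol{A}}-FF^\top\|_{wF}^2$ over $F$.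
   Context: $\odot$ denotes the entrywise product. The weighted Frobenius norm is defined by $\|\boldsymbol{B}\|_{wF}^2=\sum_{x,x'}b_{x,x'}^2/\tau_{x,x'}^2$ for $\boldsymbol{B}=(b_{x,x'})$. *)

theory Defs
  imports "HOL-Analysis.Analysis"
begin

definition wdeg :: "('x::finite \<Rightarrow> 'x \<Rightarrow> real) \<Rightarrow> 'x \<Rightarrow> real" where
  "wdeg w x = (\<Sum>x'\<in>UNIV. w x x')"

definition temp_loss ::
  "('x::finite \<Rightarrow> 'x \<Rightarrow> real) \<Rightarrow> ('x \<Rightarrow> 'x \<Rightarrow> real) \<Rightarrow> ('x \<Rightarrow> real^'k) \<Rightarrow> real" where
  "temp_loss w tau f =
     - 2 * (\<Sum>x\<in>UNIV. \<Sum>x'\<in>UNIV. w x x' * ((f x \<bullet> f x') / tau x x'))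
     + (\<Sum>x\<in>UNIV. \<Sum>x'\<in>UNIV. wdeg w x * wdeg w x' * ((f x \<bullet> f x') / tau x x')\<^sup>2)"

definition adj_mat :: "('x::finite \<Rightarrow> 'x \<Rightarrow> real) \<Rightarrow> real^'x^'x" where
  "adj_mat w = (\<chi> i j. w i j)"

definition temp_mat :: "('x::finite \<Rightarrow> 'x \<Rightarrow> real) \<Rightarrow> real^'x^'x" where
  "temp_mat tau = (\<chi> i j. tau i j)"

definition deg_inv_sqrt :: "('x::finite \<Rightarrow> 'x \<Rightarrow> real) \<Rightarrow> real^'x^'x" where
  "deg_inv_sqrt w = (\<chi> i j. if i = j then 1 / sqrt (wdeg w i) else 0)"

definition norm_adj :: "('x::finite \<Rightarrow> 'x \<Rightarrow> real) \<Rightarrow> real^'x^'x" where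
  "norm_adj w = deg_inv_sqrt w ** adj_mat w ** deg_inv_sqrt w"

definition emb_mat :: "('x::finite \<Rightarrow> 'x \<Rightarrow> real) \<Rightarrow> ('x \<Rightarrow> real^'k) \<Rightarrow> real^'k^'x" where
  "emb_mat w f = (\<chi> x. sqrt (wdeg w x) *\<^sub>R f x)"

definition hadamard :: "real^'n^'m \<Rightarrow> real^'n^'m \<Rightarrow> real^'n^'m" where
  "hadamard A B = (\<chi> i j. A $ i $ j * B $ i $ j)"

definition wF_norm_sq :: "('x::finite \<Rightarrow> 'x \<Rightarrow> real) \<Rightarrow> real^'x^'x \<Rightarrow> real" where
  "wF_norm_sq tau B = (\<Sum>x\<in>UNIV. \<Sum>x'\<in>UNIV. (B $ x $ x')\<^sup>2 / (tau x x')\<^sup>2)"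

end

theory Submission
  imports Defs
begin

text \<open>Divided by \<open>\<tau>\<^sub>x\<^sub>x\<^sub>'\<close>, the \<open>(x, x')\<close> entry of the residual
  \<open>T \<odot> norm_adj w - F F\<^sup>T\<close> is
  \<open>w\<^sub>x\<^sub>x\<^sub>' / sqrt (w\<^sub>x w\<^sub>x\<^sub>') - sqrt (w\<^sub>x w\<^sub>x\<^sub>') f(x)\<^sup>T f(x') / \<tau>\<^sub>x\<^sub>x\<^sub>'\<close>:
  the temperature cancels in the first term. Its square is \<open>w\<^sub>x\<^sub>x\<^sub>'\<^sup>2 / (w\<^sub>x w\<^sub>x\<^sub>')\<close>,
  which does not depend on \<open>f\<close>, plus exactly the two summands of the loss at \<open>(x, x')\<close>.\<close>

lemma norm_adj_nth:
  "norm_adj w $ i $ j = w i j / (sqrt (wdeg w i) * sqrt (wdeg w j))"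
  unfolding norm_adj_def deg_inv_sqrt_def adj_mat_def matrix_matrix_mult_def
  by (simp add: if_distrib if_distribR sum.delta cong: if_cong)

lemma emb_mat_gram_nth:
  "(emb_mat w f ** transpose (emb_mat w f)) $ i $ j
     = sqrt (wdeg w i) * sqrt (wdeg w j) * (f i \<bullet> f j)"
  unfolding emb_mat_def matrix_matrix_mult_def transpose_def inner_vec_def
  by (simp add: sum_distrib_left algebra_simps)

lemma scaled_residual_square_expand:
  fixes s t T a g :: real
  assumes "s \<noteq> 0" "t \<noteq> 0" "T \<noteq> 0"
  shows "(T * (a / (s * t)) - s * t * g)\<^sup>2 / T\<^sup>2
     = a\<^sup>2 / (s\<^sup>2 * t\<^sup>2) - 2 * (a * (g / T)) + s\<^sup>2 * t\<^sup>2 * (g / T)\<^sup>2"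
  using assms by (simp add: field_simps power2_eq_square)

lemma temp_residual_nth_square:
  fixes f :: "'x::finite \<Rightarrow> real^'k"
  assumes "wdeg w x > 0" "wdeg w x' > 0" "tau x x' \<noteq> 0"
  shows "((hadamard (temp_mat tau) (norm_adj w)
            - emb_mat w f ** transpose (emb_mat w f)) $ x $ x')\<^sup>2 / (tau x x')\<^sup>2
    = (w x x')\<^sup>2 / (wdeg w x * wdeg w x') - 2 * (w x x' * ((f x \<bullet> f x') / tau x x'))
      + wdeg w x * wdeg w x' * ((f x \<bullet> f x') / tau x x')\<^sup>2"
proof -
  have "(hadamard (temp_mat tau) (norm_adj w)
            - emb_mat w f ** transpose (emb_mat w f)) $ x $ x'
      = tau x x' * (w x x' / (sqrt (wdeg w x) * sqrt (wdeg w x')))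
        - sqrt (wdeg w x) * sqrt (wdeg w x') * (f x \<bullet> f x')"
    by (simp add: hadamard_def temp_mat_def norm_adj_nth emb_mat_gram_nth)
  then show ?thesis
    using assms scaled_residual_square_expand
      [of "sqrt (wdeg w x)" "sqrt (wdeg w x')" "tau x x'" "w x x'" "f x \<bullet> f x'"]
    by simp
qed

lemma temp_loss_eq_wF_norm_sq:
  fixes f :: "'x::finite \<Rightarrow> real^'k"
  assumes "\<And>x. wdeg w x > 0" "\<And>x x'. tau x x' \<noteq> 0"
  shows "temp_loss w tau f
    = wF_norm_sq tau (hadamard (temp_mat tau) (norm_adj w)
                        - emb_mat w f ** transpose (emb_mat w f))
      - (\<Sum>x\<in>UNIV. \<Sum>x'\<in>UNIV. (w x x')\<^sup>2 / (wdeg w x * wdeg w x'))"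
  unfolding wF_norm_sq_def temp_loss_def
  by (simp only: temp_residual_nth_square assms not_False_eq_True)
    (simp add: sum.distrib sum_subtractf sum_distrib_left sum_negf)

theorem theorem5:
  fixes w tau :: "'x::finite \<Rightarrow> 'x \<Rightarrow> real"
  assumes sym: "\<And>x x'. w x x' = w x' x"
    and nonneg: "\<And>x x'. w x x' \<ge> 0"
    and sum1: "(\<Sum>x\<in>UNIV. \<Sum>x'\<in>UNIV. w x x') = 1"
    and deg_pos: "\<And>x. wdeg w x > 0"
    and tau_pos: "\<And>x x'. tau x x' > 0"
  shows "\<exists>C::real. \<forall>f :: 'x \<Rightarrow> real^'k.
           temp_loss w tau f =
             wF_norm_sq tau (hadamard (temp_mat tau) (norm_adj w)
                              - emb_mat w f ** transpose (emb_mat w f)) + C"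
proof -
  have tau_nonzero: "tau x x' \<noteq> 0" for x x'
    using tau_pos[of x x'] by simp
  show ?thesis
    by (rule exI[of _ "- (\<Sum>x\<in>UNIV. \<Sum>x'\<in>UNIV. (w x x')\<^sup>2 / (wdeg w x * wdeg w x'))"])
      (simp add: temp_loss_eq_wF_norm_sq[OF deg_pos tau_nonzero])
qed

end
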